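(* Let $\mathcal{C}^1, \mathcal{C}^2 \subset \mathbb{R}^l$, $p^1, p^2$, $p = p^2 - p^1 \neq 0$, $\mathcal{C} = \mathcal{C}^1 - \mathcal{C}^2 + \{p\}$, and the iterates $\beta^l_k$, $M^{i*}_k$, $(\nu^*_m)$, $z_m, z^1_m, z^2_m$, $\lambda_k$ of the growth distance algorithm be as described in the context. Then for every iteration $k \geq 0$ executed by the algorithm, the following hold: (i) (Primal feasibility) With $\beta = \beta^l_k$, $z = \sum_{m \in M^{i*}_k} \beta \nu^*_m z_m$, $\alpha = 1/\beta$, and $z^i = \sum_{m \in M^{i*}_k} \beta \nu^*_m z^i_m$ for $i \in \{1,2\}$, the pair $(\beta, z)$ is feasible for the ray intersection problem and the triple $(\alpha, z^1, z^2)$ is feasible for the growth distance problem. Moreover, $\beta > 0$ and $\alpha > 0$. (ii) (Dual feasibility) $\langle \lambda_k, z_{m_1}\rangle = \langle \lambda_k, z_{m_2}\rangle$ for all $m_1, m_2 \in M^{i*}_k$, and $\langle \lambda_k, p\rangle > 0$. (iii) (Simplex property) $\{z_m\}_{m \in M^{i*}_k} \subset \mathcal{C}$ is a linearly independent set (with $|M^{i*}_k| = l$).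
   Context: A proper convex (PC) set is a compact convex subset of $\mathbb{R}^l$ with nonempty interior. For a compact convex $\mathcal{C}$, $B_r(x)$ is the closed Euclidean ball, the inradius is $r(\mathcal{C}, x) = \max\{r \ge 0 : B_r(x) \subset \mathcal{C}\}$, the support function is $s_v[\mathcal{C}](\lambda) = \max_{z \in \mathcal{C}} \langle \lambda, z\rangle$, and a support point function $s_p[\mathcal{C}]$ is any selection $s_p[\mathcal{C}](\lambda) \in \arg\max_{z \in \mathcal{C}} \langle \lambda, z\rangle$ (arbitrary selection allowed). Setting: $\mathcal{C}^1$ is a PC set, $\mathcal{C}^2 \neq \emptyset$ is compact convex, $p^1 \in \operatorname{int}\mathcal{C}^1$, $p^2 \in \mathcal{C}^2$, $p^1 \neq p^2$, $r^i = r(\mathcal{C}^i, p^i)$ are known, and $\underline{r} = r^1 + r^2 > 0$. Let $p = p^2 - p^1$ and $\mathcal{C} = \mathcal{C}^1 - \mathcal{C}^2 + \{p\} = \{z^1 - z^2 + p: z^i \in \mathcal{C}^i\}$; then $B_{\underline r}(0) \subset \mathcal{C}$. Support values/points of $\mathcal{C}$ are computed as $s_v[\mathcal{C}](\lambda) = s_v[\mathcal{C}^1](\lambda) + s_v[\mathcal{C}^2](-\lambda) + \langle \lambda, p\rangle$ and $s_p[\mathcal{C}](\lambda) = s_p[\mathcal{C}^1](\lambda) - s_p[\mathcal{C}^2](-\lambda) + p$. Growth distance problem: minimize $\alpha$ over $\alpha \ge 0$, $z^1 \in \mathcal{C}^1$, $z^2 \in \mathcal{C}^2$ subject to $\alpha(z^1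 - p^1) + p^1 = \alpha(z^2 - p^2) + p^2$. Ray intersection problem: maximize $\beta$ over $(\beta, z)$ subject to $z \in \mathcal{C}$, $z = \beta p$. Algorithm. Initialization ($k=0$): $M^o_0 = \emptyset$, $\beta^u_0 = \infty$; $M^i_0 = \{-l+1, \dots, 0\}$; choose $l-1$ linearly independent unit vectors $p^\perp_m$ ($m = -l+1, \dots, -1$) orthogonal to $p$, and set $z_m = K p^\perp_m + \epsilon p/\|p\|$ for $m = -l+1,\dots,-1$ and $z_0 = l\epsilon p/\|p\| - \sum_{m=-l+1}^{-1} z_m$, where $\epsilon > 0$, $K > 0$ are such that $\|z_m\| \le \underline r$ for all $m \in M^i_0$; for each such $m$ fix some $z^1_m \in \mathcal{C}^1$, $z^2_m \in \mathcal{C}^2$ with $z_m = z^1_m - z^2_m + p$. Set $M^{i*}_0 = M^i_0$, $\beta^l_0 = \epsilon/\|p\|$, the basic values $\nu^*_m = \|p\|/(l\epsilon)$ for $m \in M^{i*}_0$, and $\lambda_0 = p/\|p\|_\infty$. Iteration $k \ge 1$: compute $z^1_k = s_p[\mathcal{C}^1](\lambda_{k-1})$, $z^2_k = s_p[\mathcal{C}^2](-\lambda_{k-1})$, $z_k = z^1_k - z^2_k + p$, $v_k = s_v[\mathcal{C}](\lambda_{k-1})$. Outer update: $M^o_k = \{m^*\}$ with $m^* \in \arg\min_{m \in M^o_{k-1} \cup \{k\}} v_m/\langle \lambda_{m-1}, p\rangle$ and $\beta^u_k = \min\{\beta^u_{k-1}, v_k/\langle \lambda_{k-1}, p\rangle\}$.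 Inner update: set $M^i_k = M^i_{k-1} \cup \{k\}$ and solve the linear program $\min \sum_{m \in M^i_k} \nu_m$ subject to $\sum_{m \in M^i_k} \nu_m z_m = p$, $\nu \ge 0$, by the primal Simplex method started from the basis $M^{i*}_{k-1}$ (entering index chosen with most negative reduced cost, leaving index by the minimum-ratio test, with Bland's anti-cycling rule), giving an optimal basis $M^{i*}_k \subset M^i_k$ and basic optimal solution $(\nu^*_m)$ (with $\nu^*_m = 0$ off the basis); set $\beta^l_k = (\sum_m \nu^*_m)^{-1}$. Then $M^i_k$ may be pruned to any subset still containing $M^{i*}_k$. Set $\lambda_k = Z^{-\top}\mathbf{1}$ where $Z = [z_{m_1} \cdots z_{m_l}]$, $\{m_1,\dots,m_l\} = M^{i*}_k$, and then normalize $\lambda_k \leftarrow \lambda_k/\|\lambda_k\|_\infty$. The algorithm stops when $\beta^u_k/\beta^l_k - 1 < \epsilon_{tol}$ or $k = K_{max}$. *)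

theory Defs
  imports "HOL-Analysis.Analysis"
begin

definition PC_set :: "'a::euclidean_space set \<Rightarrow> bool" where
  "PC_set S \<longleftrightarrow> compact S \<and> convex S \<and> interior S \<noteq> {}"

definition inradius :: "'a::euclidean_space set \<Rightarrow> 'a \<Rightarrow> real" where
  "inradius S x = (GREATEST r. 0 \<le> r \<and> cball x r \<subseteq> S)"

definition mink_set :: "'a::euclidean_space set \<Rightarrow> 'a set \<Rightarrow> 'a \<Rightarrow> 'a set" where
  "mink_set C1 C2 p = {z1 - z2 + p | z1 z2. z1 \<in> C1 \<and> z2 \<in> C2}"

definition is_support_point :: "'a::euclidean_space set \<Rightarrow> 'a \<Rightarrow> 'a \<Rightarrow> bool" where
  "is_support_point S lam z \<longleftrightarrow> z \<in> S \<and> (\<forall>y\<in>S. lam \<bullet> y \<le> lam \<bullet> z)"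

definition gd_feasible ::
  "'a::euclidean_space set \<Rightarrow> 'a set \<Rightarrow> 'a \<Rightarrow> 'a \<Rightarrow> real \<Rightarrow> 'a \<Rightarrow> 'a \<Rightarrow> bool" where
  "gd_feasible C1 C2 p1 p2 \<alpha> z1 z2 \<longleftrightarrow>
     0 \<le> \<alpha> \<and> z1 \<in> C1 \<and> z2 \<in> C2 \<and> \<alpha> *\<^sub>R (z1 - p1) + p1 = \<alpha> *\<^sub>R (z2 - p2) + p2"

definition ray_feasible :: "'a::euclidean_space set \<Rightarrow> 'a \<Rightarrow> real \<Rightarrow> 'a \<Rightarrow> bool" where
  "ray_feasible C p \<beta> z \<longleftrightarrow> z \<in> C \<and> z = \<beta> *\<^sub>R p"

section \<open>Primal Simplex method for  min sum nu  s.t.  sum nu_m z_m = p, nu \<ge> 0\<close>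

definition coords :: "(int \<Rightarrow> 'a::euclidean_space) \<Rightarrow> int set \<Rightarrow> 'a \<Rightarrow> int \<Rightarrow> real" where
  "coords z B v = (THE c. (\<forall>i. i \<notin> B \<longrightarrow> c i = 0) \<and> (\<Sum>i\<in>B. c i *\<^sub>R z i) = v)"

text \<open>Reduced cost of column j (all costs equal 1): c_j - c_B^T Z_B^{-1} z_j.\<close>
definition reduced_cost :: "(int \<Rightarrow> 'a::euclidean_space) \<Rightarrow> int set \<Rightarrow> int \<Rightarrow> real" where
  "reduced_cost z B j = 1 - (\<Sum>i\<in>B. coords z B (z j) i)"

definition simplex_pivot ::
  "int set \<Rightarrow> (int \<Rightarrow> 'a::euclidean_space) \<Rightarrow> 'a \<Rightarrow> int set \<Rightarrow> int set \<Rightarrow> bool" where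
  "simplex_pivot M z p B B' \<longleftrightarrow>
     (\<exists>j\<in>M - B. \<exists>i\<in>B.
        reduced_cost z B j < 0 \<and>
        (\<forall>j'\<in>M. reduced_cost z B j \<le> reduced_cost z B j') \<and>
        coords z B (z j) i > 0 \<and>
        (\<forall>i'\<in>B. coords z B (z j) i' > 0 \<longrightarrow>
            coords z B p i / coords z B (z j) i \<le> coords z B p i' / coords z B (z j) i') \<and>
        B' = insert j (B - {i}))"

definition simplex_optimal :: "int set \<Rightarrow> (int \<Rightarrow> 'a::euclidean_space) \<Rightarrow> int set \<Rightarrow> bool" where
  "simplex_optimal M z B \<longleftrightarrow> (\<forall>j\<in>M. 0 \<le> reduced_cost z B j)"

definition simplex_run ::
  "int set \<Rightarrow> (int \<Rightarrow> 'a::euclidean_space) \<Rightarrow> 'a \<Rightarrow> int set \<Rightarrow> int set \<Rightarrow> bool" where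
  "simplex_run M z p B0 B \<longleftrightarrow> (simplex_pivot M z p)\<^sup>*\<^sup>* B0 B \<and> simplex_optimal M z B"

definition dual_vec :: "(int \<Rightarrow> 'a::euclidean_space) \<Rightarrow> int set \<Rightarrow> 'a" where
  "dual_vec z B = (THE y. \<forall>m\<in>B. y \<bullet> z m = 1)"

definition init_idx :: "'a::euclidean_space itself \<Rightarrow> int set" where
  "init_idx _ = {- int DIM('a) + 1 .. 0}"

definition gd_run ::
  "'a::euclidean_space set \<Rightarrow> 'a set \<Rightarrow> 'a \<Rightarrow> 'a \<Rightarrow> real \<Rightarrow> nat \<Rightarrow>
   real \<Rightarrow> real \<Rightarrow> (int \<Rightarrow> 'a) \<Rightarrow>
   (nat \<Rightarrow> int set) \<Rightarrow> (nat \<Rightarrow> int set) \<Rightarrow>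
   (int \<Rightarrow> 'a) \<Rightarrow> (int \<Rightarrow> 'a) \<Rightarrow> (int \<Rightarrow> 'a) \<Rightarrow> (nat \<Rightarrow> 'a) \<Rightarrow> bool" where
  "gd_run C1 C2 p1 p2 r N \<epsilon> K pperp Mi Mstar z z1 z2 lam \<longleftrightarrow>
     (let p = p2 - p1; I0 = init_idx TYPE('a); P = {- int DIM('a) + 1 .. -1} in
      \<comment> \<open>initialization, k = 0\<close>
      0 < \<epsilon> \<and> 0 < K \<and>
      (\<forall>m\<in>P. norm (pperp m) = 1 \<and> pperp m \<bullet> p = 0) \<and>
      inj_on pperp P \<and> independent (pperp ` P) \<and>
      (\<forall>m\<in>P. z m = K *\<^sub>R pperp m + (\<epsilon> / norm p) *\<^sub>R p) \<and>
      z 0 = (real DIM('a) * \<epsilon> / norm p) *\<^sub>R p - (\<Sum>m\<in>P. z m) \<and>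
      (\<forall>m\<in>I0. norm (z m) \<le> r) \<and>
      (\<forall>m\<in>I0. z1 m \<in> C1 \<and> z2 m \<in> C2 \<and> z m = z1 m - z2 m + p) \<and>
      Mi 0 = I0 \<and> Mstar 0 = I0 \<and>
      lam 0 = (1 / infnorm p) *\<^sub>R p \<and>
      \<comment> \<open>iterations k = 1..N\<close>
      (\<forall>k. 1 \<le> k \<and> k \<le> N \<longrightarrow>
         is_support_point C1 (lam (k - 1)) (z1 (int k)) \<and>
         is_support_point C2 (- lam (k - 1)) (z2 (int k)) \<and>
         z (int k) = z1 (int k) - z2 (int k) + p \<and>
         simplex_run (insert (int k) (Mi (k - 1))) z p (Mstar (k - 1)) (Mstar k) \<and>
         Mstar k \<subseteq> Mi k \<and> Mi k \<subseteq> insert (int k) (Mi (k - 1)) \<and>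
         lam k = (1 / infnorm (dual_vec z (Mstar k))) *\<^sub>R dual_vec z (Mstar k)))"

definition basic_sol :: "(int \<Rightarrow> 'a::euclidean_space) \<Rightarrow> 'a \<Rightarrow> int set \<Rightarrow> int \<Rightarrow> real" where
  "basic_sol z p B = coords z B p"

definition beta_low :: "(int \<Rightarrow> 'a::euclidean_space) \<Rightarrow> 'a \<Rightarrow> int set \<Rightarrow> real" where
  "beta_low z p B = 1 / (\<Sum>m\<in>B. basic_sol z p B m)"

end

theory Submission
  imports Defs
begin

text \<open>
  The columns \<open>z\<^sub>m\<close>, \<open>m \<in> M\<^sup>i\<^sup>*\<^sub>k\<close>, always form a basis of \<open>\<real>\<^sup>l\<close> in which \<open>p\<close> has
  nonnegative coordinates \<open>\<nu>\<^sup>*\<close>: the column sum of the initial simplex is a positive multiple of \<open>p\<close>,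
  and a Simplex pivot preserves both properties (exchange lemma for the basis, minimum-ratio test
  for the signs). Normalised, \<open>\<nu>\<^sup>*\<close> are convex weights, which give the primal points of (i).
  The vector \<open>\<lambda>\<^sub>k\<close> is a positive multiple of \<open>Z\<^sup>-\<^sup>T \<one>\<close> (of \<open>p\<close> when \<open>k = 0\<close>), so it takes one positive
  value on all columns, and \<open>\<langle>\<lambda>\<^sub>k, p\<rangle> = \<Sum>\<^sub>m \<nu>\<^sup>*\<^sub>m \<langle>\<lambda>\<^sub>k, z\<^sub>m\<rangle> > 0\<close>.
\<close>

definition basis_columns :: "('i \<Rightarrow> 'a::euclidean_space) \<Rightarrow> 'i set \<Rightarrow> bool" where
  "basis_columns z B \<longleftrightarrow> finite B \<and> inj_on z B \<and> independent (z ` B) \<and> card B = DIM('a)"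

definition feasible_basis :: "(int \<Rightarrow> 'a::euclidean_space) \<Rightarrow> 'a \<Rightarrow> int set \<Rightarrow> bool" where
  "feasible_basis z p B \<longleftrightarrow> basis_columns z B \<and> (\<forall>m\<in>B. 0 \<le> coords z B p m)"

lemma span_basis_columns:
  fixes z :: "'i \<Rightarrow> 'a::euclidean_space"
  assumes "basis_columns z B"
  shows "span (z ` B) = UNIV"
proof -
  have "card (z ` B) = dim (UNIV :: 'a set)"
    using assms by (simp add: basis_columns_def card_image)
  then show ?thesis
    using card_eq_dim[of "z ` B" UNIV] assms by (auto simp: basis_columns_def)
qed

lemma basis_columnsI:
  fixes z :: "'i \<Rightarrow> 'a::euclidean_space"
  assumes "finite B" "card B = DIM('a)" "span (z ` B) = UNIV"
  shows "basis_columns z B"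
proof -
  have "DIM('a) \<le> card (z ` B)"
    using dim_le_card[of UNIV "z ` B"] assms by simp
  then have card_image: "card (z ` B) = card B"
    using card_image_le[OF \<open>finite B\<close>, of z] assms(2) by simp
  then have "independent (z ` B)"
    using card_eq_dim[of "z ` B" UNIV] assms by simp
  then show ?thesis
    using eq_card_imp_inj_on[OF \<open>finite B\<close> card_image] assms by (simp add: basis_columns_def)
qed

lemma independent_sum_scaleR_eq_0:
  fixes z :: "'i \<Rightarrow> 'a::real_vector"
  assumes "finite B" "inj_on z B" "independent (z ` B)"
    and "(\<Sum>m\<in>B. u m *\<^sub>R z m) = 0" "m \<in> B"
  shows "u m = 0"
proof -
  have "(\<Sum>v\<in>z ` B. u (inv_into B z v) *\<^sub>R v) = (\<Sum>m\<in>B. u m *\<^sub>R z m)"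
    using assms(2) by (simp add: sum.reindex)
  with independentD[OF assms(3) _ order_refl, of "\<lambda>v. u (inv_into B z v)" "z m"] assms
  show ?thesis by simp
qed

lemma coords_unique:
  assumes "basis_columns z B" "\<And>m. m \<notin> B \<Longrightarrow> c m = 0" "(\<Sum>m\<in>B. c m *\<^sub>R z m) = v"
  shows "coords z B v = c"
  unfolding coords_def
proof (rule the_equality)
  fix c' assume c': "(\<forall>m. m \<notin> B \<longrightarrow> c' m = 0) \<and> (\<Sum>m\<in>B. c' m *\<^sub>R z m) = v"
  then have "(\<Sum>m\<in>B. (c' m - c m) *\<^sub>R z m) = 0"
    using assms(3) by (simp add: scaleR_left_diff_distrib sum_subtractf)
  then have "c' m = c m" if "m \<in> B" for m
    using independent_sum_scaleR_eq_0[of B z "\<lambda>m. c' m - c m"] assms(1) that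
    by (simp add: basis_columns_def)
  then show "c' = c" using c' assms(2) by (intro ext) metis
qed (use assms in auto)

lemma sum_coords:
  assumes "basis_columns z B"
  shows "(\<Sum>m\<in>B. coords z B v m *\<^sub>R z m) = v"
proof -
  have fin: "finite B" and inj: "inj_on z B"
    using assms by (auto simp: basis_columns_def)
  obtain u where u: "v = (\<Sum>x\<in>z ` B. u x *\<^sub>R x)"
    using span_basis_columns[OF assms] span_finite[of "z ` B"] fin by auto
  define c where "c m = (if m \<in> B then u (z m) else 0)" for m
  have "(\<Sum>m\<in>B. c m *\<^sub>R z m) = v"
    using u inj by (simp add: c_def sum.reindex)
  moreover from this have "coords z B v = c"
    by (intro coords_unique[OF assms]) (simp_all add: c_def)
  ultimately show ?thesis
    by simp
qed

lemma orthogonal_basis_columns_eq_0: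
  assumes "basis_columns z B" "\<And>m. m \<in> B \<Longrightarrow> y \<bullet> z m = 0"
  shows "y = 0"
proof -
  have "orthogonal y y"
    using orthogonal_to_span[of y "z ` B" y] span_basis_columns[OF assms(1)] assms(2)
    by (auto simp: orthogonal_def)
  then show ?thesis by (simp add: orthogonal_def)
qed

lemma dual_vec_inner:
  assumes "basis_columns z B" "m \<in> B"
  shows "dual_vec z B \<bullet> z m = 1"
proof -
  have fin: "finite B" and inj: "inj_on z B" and ind: "independent (z ` B)"
    using assms by (auto simp: basis_columns_def)
  \<comment> \<open>the Gram map \<open>y \<mapsto> \<Sum>\<^sub>m \<langle>y, z\<^sub>m\<rangle> z\<^sub>m\<close> is injective, hence surjective\<close>
  define G where "G y = (\<Sum>m\<in>B. (y \<bullet> z m) *\<^sub>R z m)" for y :: 'a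
  have lin: "linear G"
    unfolding G_def by (intro linear_compose_sum) (auto intro!: linearI simp: inner_add_left scaleR_add_left)
  have "inj G"
  proof (rule linear_injective_0[OF lin, THEN iffD2], intro allI impI)
    fix y assume "G y = 0"
    then show "y = 0"
      using independent_sum_scaleR_eq_0[OF fin inj ind, of "\<lambda>m. y \<bullet> z m"]
        orthogonal_basis_columns_eq_0[OF assms(1)]
      unfolding G_def by blast
  qed
  then obtain y where "G y = (\<Sum>m\<in>B. z m)"
    using linear_injective_imp_surjective[OF lin] by (metis surjD)
  then have "(\<Sum>m\<in>B. (y \<bullet> z m - 1) *\<^sub>R z m) = 0"
    unfolding G_def by (simp add: scaleR_left_diff_distrib sum_subtractf)
  then have y: "\<forall>m\<in>B. y \<bullet> z m = 1"
    using independent_sum_scaleR_eq_0[OF fin inj ind, of "\<lambda>m. y \<bullet> z m - 1"] by auto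
  have "dual_vec z B = y"
    unfolding dual_vec_def
  proof (rule the_equality)
    fix y' assume "\<forall>m\<in>B. y' \<bullet> z m = 1"
    then have "y' - y = 0"
      using y orthogonal_basis_columns_eq_0[OF assms(1), of "y' - y"] by (simp add: inner_diff_left)
    then show "y' = y" by simp
  qed (fact y)
  then show ?thesis using y assms(2) by simp
qed

lemma basis_columns_exchange:
  assumes bas: "basis_columns z B" and "i \<in> B" "j \<notin> B" and d: "coords z B (z j) i \<noteq> 0"
  shows "basis_columns z (insert j (B - {i}))"
proof (rule basis_columnsI)
  let ?B' = "insert j (B - {i})" and ?d = "coords z B (z j)"
  have fin: "finite B" using bas by (simp add: basis_columns_def)
  then show "finite ?B'" by simp
  show "card ?B' = DIM('a)"
    using fin assms(2,3) bas by (simp add: basis_columns_def card_insert_if)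
  have "z i \<in> span (z ` ?B')"
  proof -
    have "z j - (\<Sum>m\<in>B - {i}. ?d m *\<^sub>R z m) = ?d i *\<^sub>R z i"
      using sum_coords[OF bas, of "z j"] fin assms(2) by (simp add: sum.remove algebra_simps)
    then have "z i = (1 / ?d i) *\<^sub>R (z j - (\<Sum>m\<in>B - {i}. ?d m *\<^sub>R z m))"
      using d by simp
    also have "\<dots> \<in> span (z ` ?B')"
      by (intro span_scale span_diff span_sum) (auto intro: span_base)
    finally show ?thesis .
  qed
  then have "z ` B \<subseteq> span (z ` ?B')"
    by (auto intro: span_base)
  then show "span (z ` ?B') = UNIV"
    using span_basis_columns[OF bas] span_minimal[of "z ` B" "span (z ` ?B')"] by auto
qed

lemma coords_exchange:
  fixes v :: "'a::euclidean_space"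
  assumes bas: "basis_columns z B" and "i \<in> B" "j \<notin> B" and d: "coords z B (z j) i \<noteq> 0"
  defines "c \<equiv> coords z B v" and "d \<equiv> coords z B (z j)"
  shows "coords z (insert j (B - {i})) v =
    (\<lambda>m. if m = j then c i / d i else if m \<in> B - {i} then c m - c i / d i * d m else 0)"
    (is "_ = ?c'")
proof (rule coords_unique[OF basis_columns_exchange[OF assms(1-4)]])
  let ?t = "c i / d i"
  have fin: "finite B" using bas by (simp add: basis_columns_def)
  have "(\<Sum>m\<in>insert j (B - {i}). ?c' m *\<^sub>R z m) =
      ?c' j *\<^sub>R z j + (\<Sum>m\<in>B - {i}. ?c' m *\<^sub>R z m)"
    using fin assms(3) by (intro sum.insert) auto
  also have "(\<Sum>m\<in>B - {i}. ?c' m *\<^sub>R z m) = (\<Sum>m\<in>B - {i}. (c m - ?t * d m) *\<^sub>R z m)"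
    using assms(3) by (intro sum.cong) auto
  also have "\<dots> = (\<Sum>m\<in>B. (c m - ?t * d m) *\<^sub>R z m)"
    using fin assms(2) d by (simp add: sum.remove d_def)
  also have "\<dots> = (\<Sum>m\<in>B. c m *\<^sub>R z m) - ?t *\<^sub>R (\<Sum>m\<in>B. d m *\<^sub>R z m)"
    by (simp only: scaleR_diff_left sum_subtractf scaleR_sum_right scaleR_scaleR)
  also have "\<dots> = v - ?t *\<^sub>R z j"
    using sum_coords[OF bas, of v] sum_coords[OF bas, of "z j"] by (simp add: c_def d_def)
  finally show "(\<Sum>m\<in>insert j (B - {i}). ?c' m *\<^sub>R z m) = v"
    by simp
qed auto

lemma simplex_pivot_feasible_basis:
  assumes "feasible_basis z p B" "simplex_pivot M z p B B'"
  shows "feasible_basis z p B'"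
proof -
  have bas: "basis_columns z B" and nonneg: "\<And>m. m \<in> B \<Longrightarrow> 0 \<le> coords z B p m"
    using assms(1) by (auto simp: feasible_basis_def)
  define c d where "c = coords z B p" and "d j = coords z B (z j)" for j
  obtain j i where "j \<notin> B" "i \<in> B" and d_pos: "d j i > 0"
    and ratio: "\<And>m. m \<in> B \<Longrightarrow> d j m > 0 \<Longrightarrow> c i / d j i \<le> c m / d j m"
    and B': "B' = insert j (B - {i})"
    using assms(2) by (auto simp: simplex_pivot_def c_def d_def)
  have "coords z B' p m \<ge> 0" if "m \<in> B'" for m
  proof -
    have t: "c i / d j i \<ge> 0" using nonneg[OF \<open>i \<in> B\<close>] d_pos by (simp add: c_def)
    have "c i / d j i * d j m \<le> c m" if "m \<in> B"
    proof (cases "d j m > 0")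
      case True
      then show ?thesis using ratio[OF that] by (simp add: le_divide_eq)
    next
      case False
      then have "c i / d j i * d j m \<le> 0"
        using t by (intro mult_nonneg_nonpos) auto
      then show ?thesis using nonneg[OF that] by (simp add: c_def)
    qed
    then show ?thesis
      using coords_exchange[OF bas \<open>i \<in> B\<close> \<open>j \<notin> B\<close>, of p] d_pos t \<open>m \<in> B'\<close>
      by (auto simp: B' c_def d_def)
  qed
  then show ?thesis
    using basis_columns_exchange[OF bas \<open>i \<in> B\<close> \<open>j \<notin> B\<close>] d_pos
    by (simp add: feasible_basis_def B' d_def)
qed

lemma simplex_run_feasible_basis:
  assumes "feasible_basis z p B0" "simplex_run M z p B0 B"
  shows "feasible_basis z p B"
proof -
  have "(simplex_pivot M z p)\<^sup>*\<^sup>* B0 B"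
    using assms(2) by (simp add: simplex_run_def)
  then show ?thesis
    using assms(1) by (induction rule: rtranclp_induct) (auto intro: simplex_pivot_feasible_basis)
qed

lemma coords_sum_pos:
  assumes "feasible_basis z p B" "p \<noteq> 0"
  shows "0 < (\<Sum>m\<in>B. coords z B p m)"
proof -
  have bas: "basis_columns z B" and nonneg: "\<forall>m\<in>B. 0 \<le> coords z B p m"
    using assms(1) by (auto simp: feasible_basis_def)
  obtain m where "m \<in> B" "coords z B p m \<noteq> 0"
    using sum_coords[OF bas, of p] assms(2) by (metis (no_types, lifting) scale_zero_left sum.neutral)
  then show ?thesis
    using bas nonneg by (intro sum_pos2) (auto simp: basis_columns_def less_le)
qed

lemma beta_low_pos:
  assumes "feasible_basis z p B" "p \<noteq> 0"
  shows "0 < beta_low z p B"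
  using coords_sum_pos[OF assms] by (simp add: beta_low_def basic_sol_def)

lemma sum_beta_low_basic_sol:
  assumes "feasible_basis z p B" "p \<noteq> 0"
  shows "(\<Sum>m\<in>B. beta_low z p B * basic_sol z p B m) = 1"
  using coords_sum_pos[OF assms]
  by (simp add: beta_low_def basic_sol_def flip: sum_divide_distrib)

lemma sum_beta_low_basic_sol_scaleR:
  assumes "basis_columns z B"
  shows "(\<Sum>m\<in>B. (beta_low z p B * basic_sol z p B m) *\<^sub>R z m) = beta_low z p B *\<^sub>R p"
proof -
  have "(\<Sum>m\<in>B. (beta_low z p B * basic_sol z p B m) *\<^sub>R z m) =
      beta_low z p B *\<^sub>R (\<Sum>m\<in>B. basic_sol z p B m *\<^sub>R z m)"
    by (simp add: scaleR_sum_right)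
  then show ?thesis
    using sum_coords[OF assms, of p] by (simp add: basic_sol_def)
qed

lemma feasible_basis_primal_feasible:
  fixes z z1 z2 :: "int \<Rightarrow> 'a::euclidean_space"
  assumes fb: "feasible_basis z (p2 - p1) B" and "p1 \<noteq> p2" and "convex C1" "convex C2"
    and cols: "\<And>m. m \<in> B \<Longrightarrow> z1 m \<in> C1 \<and> z2 m \<in> C2 \<and> z m = z1 m - z2 m + (p2 - p1)"
  defines "\<beta> \<equiv> beta_low z (p2 - p1) B" and "\<nu> \<equiv> basic_sol z (p2 - p1) B"
  shows "ray_feasible (mink_set C1 C2 (p2 - p1)) (p2 - p1) \<beta> (\<Sum>m\<in>B. (\<beta> * \<nu> m) *\<^sub>R z m)"
    and "gd_feasible C1 C2 p1 p2 (1 / \<beta>) (\<Sum>m\<in>B. (\<beta> * \<nu> m) *\<^sub>R z1 m) (\<Sum>m\<in>B. (\<beta> * \<nu> m) *\<^sub>R z2 m)"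
proof -
  let ?p = "p2 - p1"
  define x x1 x2 where "x = (\<Sum>m\<in>B. (\<beta> * \<nu> m) *\<^sub>R z m)"
    and "x1 = (\<Sum>m\<in>B. (\<beta> * \<nu> m) *\<^sub>R z1 m)" and "x2 = (\<Sum>m\<in>B. (\<beta> * \<nu> m) *\<^sub>R z2 m)"
  have bas: "basis_columns z B" and fin: "finite B"
    using fb by (auto simp: feasible_basis_def basis_columns_def)
  have p0: "?p \<noteq> 0" using \<open>p1 \<noteq> p2\<close> by simp
  have \<beta>_pos: "0 < \<beta>" using beta_low_pos[OF fb p0] by (simp add: \<beta>_def)
  have w_nonneg: "0 \<le> \<beta> * \<nu> m" if "m \<in> B" for m
    using fb that \<beta>_pos by (simp add: feasible_basis_def \<nu>_def basic_sol_def)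
  have w_sum: "(\<Sum>m\<in>B. \<beta> * \<nu> m) = 1"
    using sum_beta_low_basic_sol[OF fb p0] by (simp add: \<beta>_def \<nu>_def)
  have x_ray: "x = \<beta> *\<^sub>R ?p"
    using sum_beta_low_basic_sol_scaleR[OF bas] by (simp add: x_def \<beta>_def \<nu>_def)
  have x1: "x1 \<in> C1" and x2: "x2 \<in> C2"
    unfolding x1_def x2_def using cols w_nonneg w_sum
    by (auto intro!: convex_sum[OF fin \<open>convex C1\<close>] convex_sum[OF fin \<open>convex C2\<close>])
  have "x = (\<Sum>m\<in>B. (\<beta> * \<nu> m) *\<^sub>R (z1 m - z2 m + ?p))"
    unfolding x_def using cols by (intro sum.cong) auto
  also have "\<dots> = x1 - x2 + (\<Sum>m\<in>B. \<beta> * \<nu> m) *\<^sub>R ?p"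
    by (simp add: x1_def x2_def scaleR_right_distrib scaleR_right_diff_distrib sum.distrib
        sum_subtractf scaleR_sum_left)
  finally have x_diff: "x = x1 - x2 + ?p"
    using w_sum by simp
  show "ray_feasible (mink_set C1 C2 ?p) ?p \<beta> x"
    using x_diff x_ray x1 x2 by (auto simp: ray_feasible_def mink_set_def)
  have "x1 - x2 = (\<beta> - 1) *\<^sub>R ?p"
    using x_diff x_ray by (simp add: algebra_simps)
  then have "(1 / \<beta>) *\<^sub>R (x1 - x2) = (1 / \<beta> * (\<beta> - 1)) *\<^sub>R ?p"
    by simp
  also have "1 / \<beta> * (\<beta> - 1) = 1 - 1 / \<beta>"
    using \<beta>_pos by (simp add: field_simps)
  finally have "(1 / \<beta>) *\<^sub>R (x1 - x2) = (1 - 1 / \<beta>) *\<^sub>R ?p" .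
  moreover have "((1 / \<beta>) *\<^sub>R (x1 - p1) + p1) - ((1 / \<beta>) *\<^sub>R (x2 - p2) + p2) =
      (1 / \<beta>) *\<^sub>R (x1 - x2) - (1 - 1 / \<beta>) *\<^sub>R ?p"
    by (simp add: algebra_simps)
  ultimately have "(1 / \<beta>) *\<^sub>R (x1 - p1) + p1 = (1 / \<beta>) *\<^sub>R (x2 - p2) + p2"
    by simp
  then show "gd_feasible C1 C2 p1 p2 (1 / \<beta>) x1 x2"
    using x1 x2 \<beta>_pos by (simp add: gd_feasible_def)
qed

lemma inner_pos_if_constant_on_feasible_basis:
  assumes "feasible_basis z p B" "p \<noteq> 0" "0 < c" "\<And>m. m \<in> B \<Longrightarrow> lam \<bullet> z m = c"
  shows "0 < lam \<bullet> p"
proof -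
  have "lam \<bullet> p = (\<Sum>m\<in>B. coords z B p m * (lam \<bullet> z m))"
    using sum_coords[of z B p] assms(1)
    by (metis (no_types, lifting) feasible_basis_def inner_scaleR_right inner_sum_right sum.cong)
  also have "\<dots> = c * (\<Sum>m\<in>B. coords z B p m)"
    using assms(4) by (simp add: sum_distrib_left mult.commute)
  finally show ?thesis
    using coords_sum_pos[OF assms(1,2)] assms(3) by simp
qed

lemma span_insert_orthogonal:
  fixes p :: "'a::euclidean_space"
  assumes "p \<noteq> 0" "independent S" "card S = DIM('a) - 1" "\<And>s. s \<in> S \<Longrightarrow> s \<bullet> p = 0"
  shows "span (insert p S) = UNIV"
proof -
  have "p \<notin> span S"
  proof
    assume "p \<in> span S"
    then have "orthogonal p p"
      by (rule orthogonal_to_span) (use assms(4) in \<open>auto simp: orthogonal_def inner_commute\<close>)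
    with assms(1) show False by (simp add: orthogonal_def)
  qed
  moreover have fin: "finite S"
    using assms(2) by (simp add: independent_imp_finite)
  moreover have "p \<notin> S"
    using calculation by (auto intro: span_base)
  ultimately have "independent (insert p S)" and "card (insert p S) = DIM('a)"
    using assms(2,3) DIM_positive[where 'a='a] by (simp_all add: independent_insertI)
  then show ?thesis
    using card_eq_dim[of "insert p S" UNIV] fin by auto
qed

lemma feasible_basis_if_sum_columns:
  assumes "basis_columns z B" "(\<Sum>m\<in>B. z m) = c *\<^sub>R p" "0 < c"
  shows "feasible_basis z p B"
proof -
  have "coords z B p = (\<lambda>m. if m \<in> B then 1 / c else 0)"
    by (rule coords_unique[OF assms(1)]) (use assms(2,3) in \<open>simp_all flip: scaleR_sum_right\<close>)
  then show ?thesis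
    using assms(1,3) by (simp add: feasible_basis_def)
qed

lemma gd_run_init:
  fixes C1 :: "'a::euclidean_space set"
  assumes "gd_run C1 C2 p1 p2 r N \<epsilon> K pperp Mi Mstar z z1 z2 lam"
  defines "p \<equiv> p2 - p1" and "P \<equiv> {- int DIM('a) + 1 .. -1}"
  shows "0 < \<epsilon>" and "0 < K" and "\<And>m. m \<in> P \<Longrightarrow> pperp m \<bullet> p = 0"
    and "inj_on pperp P" and "independent (pperp ` P)"
    and "\<And>m. m \<in> P \<Longrightarrow> z m = K *\<^sub>R pperp m + (\<epsilon> / norm p) *\<^sub>R p"
    and "z 0 = (real DIM('a) * \<epsilon> / norm p) *\<^sub>R p - (\<Sum>m\<in>P. z m)"
    and "Mi 0 = init_idx TYPE('a)" and "Mstar 0 = init_idx TYPE('a)"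
    and "lam 0 = (1 / infnorm p) *\<^sub>R p"
  using assms by (simp_all add: gd_run_def Let_def)

lemma gd_run_step:
  assumes "gd_run C1 C2 p1 p2 r N \<epsilon> K pperp Mi Mstar z z1 z2 lam" "1 \<le> k" "k \<le> N"
  shows "simplex_run (insert (int k) (Mi (k - 1))) z (p2 - p1) (Mstar (k - 1)) (Mstar k)"
    and "Mstar k \<subseteq> Mi k" and "Mi k \<subseteq> insert (int k) (Mi (k - 1))"
    and "lam k = (1 / infnorm (dual_vec z (Mstar k))) *\<^sub>R dual_vec z (Mstar k)"
  using assms by (simp_all add: gd_run_def Let_def)

lemma gd_run_columns:
  fixes C1 :: "'a::euclidean_space set"
  assumes run: "gd_run C1 C2 p1 p2 r N \<epsilon> K pperp Mi Mstar z z1 z2 lam"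
    and m: "m \<in> {- int DIM('a) + 1 .. int N}"
  shows "z1 m \<in> C1 \<and> z2 m \<in> C2 \<and> z m = z1 m - z2 m + (p2 - p1)"
proof (cases "m \<le> 0")
  case True
  then show ?thesis
    using run m by (simp add: gd_run_def Let_def init_idx_def)
next
  case False
  then have "1 \<le> nat m" "nat m \<le> N" "m = int (nat m)"
    using m by auto
  then show ?thesis
    using run unfolding gd_run_def Let_def is_support_point_def by metis
qed

lemma gd_run_initial_feasible_basis:
  fixes C1 :: "'a::euclidean_space set"
  assumes run: "gd_run C1 C2 p1 p2 r N \<epsilon> K pperp Mi Mstar z z1 z2 lam" and "p1 \<noteq> p2"
  shows "feasible_basis z (p2 - p1) (init_idx TYPE('a))"
proof -
  let ?p = "p2 - p1" and ?I = "init_idx TYPE('a)" and ?P = "{- int DIM('a) + 1 .. -1}"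
  define c where "c = real DIM('a) * \<epsilon> / norm ?p"
  have p0: "?p \<noteq> 0" using \<open>p1 \<noteq> p2\<close> by simp
  note init = gd_run_init[OF run]
  have I: "?I = insert 0 ?P" "0 \<notin> ?P"
    by (auto simp: init_idx_def)
  have sum_I: "(\<Sum>m\<in>?I. z m) = c *\<^sub>R ?p"
    using init(7) I by (simp add: c_def)
  have c_pos: "0 < c"
    using init(1) p0 by (simp add: c_def)
  have p_span: "?p \<in> span (z ` ?I)"
  proof -
    have "?p = (1 / c) *\<^sub>R (\<Sum>m\<in>?I. z m)"
      using sum_I c_pos by simp
    also have "\<dots> \<in> span (z ` ?I)"
      by (intro span_scale span_sum) (auto intro: span_base)
    finally show ?thesis .
  qed
  have pperp_span: "pperp m \<in> span (z ` ?I)" if "m \<in> ?P" for m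
  proof -
    have "pperp m = (1 / K) *\<^sub>R (z m - (\<epsilon> / norm ?p) *\<^sub>R ?p)"
      using init(2,6) that by simp
    also have "\<dots> \<in> span (z ` ?I)"
      using that I by (intro span_scale[OF p_span] span_scale span_diff span_base) auto
    finally show ?thesis .
  qed
  have "span (insert ?p (pperp ` ?P)) \<subseteq> span (z ` ?I)"
    using p_span pperp_span by (intro span_minimal) auto
  moreover have "span (insert ?p (pperp ` ?P)) = UNIV"
    using init(3,4,5) p0 by (intro span_insert_orthogonal) (auto simp: card_image)
  ultimately have "span (z ` ?I) = UNIV"
    by auto
  then have "basis_columns z ?I"
    by (intro basis_columnsI) (auto simp: init_idx_def)
  then show ?thesis
    using sum_I c_pos by (rule feasible_basis_if_sum_columns)
qed

lemma gd_run_initial_dual: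
  fixes C1 :: "'a::euclidean_space set"
  assumes run: "gd_run C1 C2 p1 p2 r N \<epsilon> K pperp Mi Mstar z z1 z2 lam" and "p1 \<noteq> p2"
    and "m \<in> init_idx TYPE('a)"
  shows "lam 0 \<bullet> z m = \<epsilon> * norm (p2 - p1) / infnorm (p2 - p1)"
proof -
  let ?p = "p2 - p1" and ?P = "{- int DIM('a) + 1 .. -1}"
  note init = gd_run_init[OF run]
  have p0: "?p \<noteq> 0" using \<open>p1 \<noteq> p2\<close> by simp
  have on_P: "?p \<bullet> z m = \<epsilon> * norm ?p" if "m \<in> ?P" for m
    using init(3,6)[OF that] p0 by (simp add: inner_add_right inner_commute dot_square_norm power2_eq_square)
  have "?p \<bullet> z m = \<epsilon> * norm ?p"
  proof (cases "m = 0")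
    case True
    have "?p \<bullet> z 0 = real DIM('a) * \<epsilon> * norm ?p - (\<Sum>m\<in>?P. ?p \<bullet> z m)"
      using init(7) p0 by (simp add: inner_diff_right inner_sum_right dot_square_norm power2_eq_square)
    also have "\<dots> = real DIM('a) * \<epsilon> * norm ?p - real (DIM('a) - 1) * (\<epsilon> * norm ?p)"
      using on_P by simp
    also have "\<dots> = \<epsilon> * norm ?p"
      by (simp add: of_nat_diff algebra_simps)
    finally show ?thesis using True by simp
  next
    case False
    then show ?thesis using on_P assms(3) by (simp add: init_idx_def)
  qed
  then show ?thesis
    using init(10) by simp
qed

lemma gd_run_feasible_basis:
  fixes C1 :: "'a::euclidean_space set"
  assumes run: "gd_run C1 C2 p1 p2 r N \<epsilon> K pperp Mi Mstar z z1 z2 lam" and "p1 \<noteq> p2" and "k \<le> N"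
  shows "feasible_basis z (p2 - p1) (Mstar k) \<and> Mstar k \<subseteq> Mi k \<and> Mi k \<subseteq> {- int DIM('a) + 1 .. int k}"
  using \<open>k \<le> N\<close>
proof (induction k)
  case 0
  then show ?case
    using gd_run_initial_feasible_basis[OF run \<open>p1 \<noteq> p2\<close>] gd_run_init(8,9)[OF run]
    by (simp add: init_idx_def)
next
  case (Suc k)
  note step = gd_run_step[OF run _ Suc.prems, simplified]
  have "feasible_basis z (p2 - p1) (Mstar (Suc k))"
    using simplex_run_feasible_basis[OF _ step(1)] Suc by simp
  moreover have "Mi (Suc k) \<subseteq> {- int DIM('a) + 1 .. int (Suc k)}"
    using step(3) Suc by force
  ultimately show ?case
    using step(2) Suc.prems by simp
qed

lemma gd_run_dual:
  fixes C1 :: "'a::euclidean_space set"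
  assumes run: "gd_run C1 C2 p1 p2 r N \<epsilon> K pperp Mi Mstar z z1 z2 lam" and "p1 \<noteq> p2" and "k \<le> N"
  obtains c where "0 < c" and "\<And>m. m \<in> Mstar k \<Longrightarrow> lam k \<bullet> z m = c"
proof (cases "k = 0")
  case True
  have "0 < \<epsilon> * norm (p2 - p1) / infnorm (p2 - p1)"
    using gd_run_init(1)[OF run] \<open>p1 \<noteq> p2\<close> by (simp add: infnorm_pos_lt)
  then show ?thesis
    using that gd_run_initial_dual[OF run \<open>p1 \<noteq> p2\<close>] gd_run_init(9)[OF run] True by simp
next
  case False
  let ?y = "dual_vec z (Mstar k)"
  have bas: "basis_columns z (Mstar k)"
    using gd_run_feasible_basis[OF assms] by (simp add: feasible_basis_def)
  then have "Mstar k \<noteq> {}"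
    by (auto simp: basis_columns_def)
  then have "?y \<noteq> 0"
    using dual_vec_inner[OF bas] by force
  then show ?thesis
    using that[of "1 / infnorm ?y"] gd_run_step(4)[OF run _ \<open>k \<le> N\<close>] False dual_vec_inner[OF bas]
    by (simp add: infnorm_pos_lt)
qed

theorem theorem1:
  fixes C1 C2 :: "'a::euclidean_space set" and p1 p2 :: 'a
    and N :: nat and \<epsilon> K :: real and pperp :: "int \<Rightarrow> 'a"
    and Mi Mstar :: "nat \<Rightarrow> int set" and z z1 z2 :: "int \<Rightarrow> 'a" and lam :: "nat \<Rightarrow> 'a"
    and k :: nat
  assumes "PC_set C1" and "compact C2" and "convex C2" and "C2 \<noteq> {}"
    and "p1 \<in> interior C1" and "p2 \<in> C2" and "p1 \<noteq> p2"
    and "inradius C1 p1 + inradius C2 p2 > 0"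
    and run: "gd_run C1 C2 p1 p2 (inradius C1 p1 + inradius C2 p2) N \<epsilon> K pperp Mi Mstar z z1 z2 lam"
    and "k \<le> N"
  shows
    "(let p = p2 - p1; B = Mstar k; \<beta> = beta_low z p B; \<nu> = basic_sol z p B; \<alpha> = 1 / \<beta>;
          zz = (\<Sum>m\<in>B. (\<beta> * \<nu> m) *\<^sub>R z m);
          zz1 = (\<Sum>m\<in>B. (\<beta> * \<nu> m) *\<^sub>R z1 m);
          zz2 = (\<Sum>m\<in>B. (\<beta> * \<nu> m) *\<^sub>R z2 m)
      in
      \<comment> \<open>(i) primal feasibility\<close>
      ray_feasible (mink_set C1 C2 p) p \<beta> zz \<and>
      gd_feasible C1 C2 p1 p2 \<alpha> zz1 zz2 \<and> 0 < \<beta> \<and> 0 < \<alpha> \<and>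
      \<comment> \<open>(ii) dual feasibility\<close>
      (\<forall>m1\<in>B. \<forall>m2\<in>B. lam k \<bullet> z m1 = lam k \<bullet> z m2) \<and> 0 < lam k \<bullet> p \<and>
      \<comment> \<open>(iii) simplex property\<close>
      z ` B \<subseteq> mink_set C1 C2 p \<and> finite B \<and> card B = DIM('a) \<and>
      inj_on z B \<and> independent (z ` B))"
proof -
  \<comment> \<open>only convexity and \<open>p\<^sup>1 \<noteq> p\<^sup>2\<close> are used; the other hypotheses merely make such runs possible\<close>
  let ?p = "p2 - p1" and ?B = "Mstar k"
  have p0: "?p \<noteq> 0" using \<open>p1 \<noteq> p2\<close> by simp
  have "convex C1" using \<open>PC_set C1\<close> by (simp add: PC_set_def)
  have fb: "feasible_basis z ?p ?B" and B_range: "?B \<subseteq> {- int DIM('a) + 1 .. int N}"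
    using gd_run_feasible_basis[OF run \<open>p1 \<noteq> p2\<close> \<open>k \<le> N\<close>] \<open>k \<le> N\<close> by auto
  have cols: "z1 m \<in> C1 \<and> z2 m \<in> C2 \<and> z m = z1 m - z2 m + ?p" if "m \<in> ?B" for m
    using gd_run_columns[OF run] B_range that by blast
  obtain c where "0 < c" and c: "\<And>m. m \<in> ?B \<Longrightarrow> lam k \<bullet> z m = c"
    using gd_run_dual[OF run \<open>p1 \<noteq> p2\<close> \<open>k \<le> N\<close>] by blast
  have "z ` ?B \<subseteq> mink_set C1 C2 ?p"
    using cols by (force simp: mink_set_def)
  then show ?thesis
    using feasible_basis_primal_feasible[OF fb \<open>p1 \<noteq> p2\<close> \<open>convex C1\<close> \<open>convex C2\<close> cols]
      beta_low_pos[OF fb p0] inner_pos_if_constant_on_feasible_basis[OF fb p0 \<open>0 < c\<close> c] c fb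
    by (simp add: Let_def feasible_basis_def basis_columns_def)
qed

end
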